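(* Let $f:\mathbb R^n\to\mathbb R$ be convex, differentiable and $L$-Lipschitz smooth, let $g:\mathbb R^n\to\mathbb R\cup\{+\infty\}$ be proper, closed and convex, and let $F=f+g$. Let $\epsilon\ge0$, $\rho>0$, $x\in\mathbb R^n$, and let $\tilde x\approx_\epsilon T_\rho(x)$. Then $$\|x-\tilde x\|\ge (L+\rho)^{-1}\operatorname{dist}\big(\mathbf 0\,\big|\,\partial_\epsilon F(\tilde x)\big).$$
   Context: $f$ is $L$-Lipschitz smooth means $D_f(x,y):=f(x)-f(y)-\langle\nabla f(y),x-y\rangle\le\frac L2\|x-y\|^2$ for all $x,y$ (equivalently, for convex differentiable $f$, $\nabla f$ is $L$-Lipschitz). For a proper $h$, $\epsilon\ge0$, $\partial_\epsilon h(\bar x)=\{v:\langle v,x-\bar x\rangle\le h(x)-h(\bar x)+\epsilon\ \forall x\}$ for $\bar x\in\operatorname{dom}h$, and $\emptyset$ otherwise. The inexact proximal gradient relation $\tilde x\approx_\epsilon T_\rho(x)$ means $\mathbf 0\in\nabla f(x)-\rho(x-\tilde x)+\partial_\epsilon g(\tilde x)$. $\operatorname{dist}(\mathbf 0|S)=\inf_{s\in S}\|s\|$, Euclidean norm. *)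

theory Defs
  imports "HOL-Analysis.Analysis"
begin

text \<open>Extended-valued functions are modelled as maps into ereal; the value \<infinity> plays the role of +\<infinity>.\<close>

definition ext_dom :: "('a \<Rightarrow> ereal) \<Rightarrow> 'a set" where
  "ext_dom h = {x. h x < \<infinity>}"

definition proper_fun :: "('a \<Rightarrow> ereal) \<Rightarrow> bool" where
  "proper_fun h \<longleftrightarrow> (\<forall>x. h x \<noteq> -\<infinity>) \<and> (\<exists>x. h x < \<infinity>)"

text \<open>Closed = lower semicontinuous = closed epigraph.\<close>
definition closed_fun :: "('a::topological_space \<Rightarrow> ereal) \<Rightarrow> bool" where
  "closed_fun h \<longleftrightarrow> closed {(x, t::real). h x \<le> ereal t}"

definition convex_efun :: "('a::real_vector \<Rightarrow> ereal) \<Rightarrow> bool" where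
  "convex_efun h \<longleftrightarrow> convex {(x, t::real). h x \<le> ereal t}"

definition eps_subdiff :: "('a::real_inner \<Rightarrow> ereal) \<Rightarrow> real \<Rightarrow> 'a \<Rightarrow> 'a set" where
  "eps_subdiff h \<epsilon> xb = (if xb \<in> ext_dom h then
      {v. \<forall>x. ereal (inner v (x - xb)) \<le> h x - h xb + ereal \<epsilon>} else {})"

text \<open>dist(0 | S) = inf of norms over S (with inf of the empty set = \<infinity>).\<close>
definition dist0 :: "'a::real_normed_vector set \<Rightarrow> ereal" where
  "dist0 S = (INF s\<in>S. ereal (norm s))"

end

theory Submission
  imports Defs
begin

text \<open>Write the inexact step as \<open>v = \<rho> (x - x\<^sub>t) - \<nabla>f x \<in> \<partial>\<^sub>\<epsilon> g x\<^sub>t\<close>. Adding the exact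
  subgradient \<open>\<nabla>f x\<^sub>t\<close> of \<open>f\<close> gives \<open>w = \<nabla>f x\<^sub>t - \<nabla>f x + \<rho> (x - x\<^sub>t) \<in> \<partial>\<^sub>\<epsilon> F x\<^sub>t\<close>, and
  \<open>\<parallel>w\<parallel> \<le> (L + \<rho>) \<parallel>x - x\<^sub>t\<parallel>\<close> because the gradient of a convex \<open>L\<close>-smooth function is
  \<open>L\<close>-Lipschitz (Baillon--Haddad).\<close>

lemma convex_on_along_line:
  assumes "convex_on UNIV f"
  shows "convex_on UNIV (\<lambda>t::real. f (a + t *\<^sub>R b))"
proof (rule convex_onI)
  fix t s r :: real
  assume "0 < t" "t < 1"
  have "a + ((1 - t) *\<^sub>R s + t *\<^sub>R r) *\<^sub>R b = (1 - t) *\<^sub>R (a + s *\<^sub>R b) + t *\<^sub>R (a + r *\<^sub>R b)"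
    by (simp add: algebra_simps)
  then show "f (a + ((1 - t) *\<^sub>R s + t *\<^sub>R r) *\<^sub>R b) \<le> (1 - t) * f (a + s *\<^sub>R b) + t * f (a + r *\<^sub>R b)"
    using convex_onD[OF assms, of t] \<open>0 < t\<close> \<open>t < 1\<close> by auto
qed simp

lemma convex_on_gradient_inequality:
  fixes f :: "'a::real_inner \<Rightarrow> real"
  assumes convex: "convex_on UNIV f"
    and deriv: "(f has_derivative (\<lambda>h. inner D h)) (at y)"
  shows "f y + inner D (z - y) \<le> f z"
proof -
  define h where "h t = f (y + t *\<^sub>R (z - y))" for t :: real
  have "((\<lambda>t. y + t *\<^sub>R (z - y)) has_derivative (\<lambda>t. t *\<^sub>R (z - y))) (at 0)"
    by (auto intro!: derivative_eq_intros)
  from diff_chain_at[OF this, of f "inner D"] deriv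
  have "(h has_derivative (\<lambda>t. inner D (t *\<^sub>R (z - y)))) (at 0)"
    unfolding h_def by (simp add: o_def)
  then have "(h has_field_derivative inner D (z - y)) (at 0)"
    by (simp add: has_field_derivative_def mult.commute[of _ "inner D (z - y)"])
  moreover have "convex_on UNIV h"
    unfolding h_def by (rule convex_on_along_line[OF convex])
  ultimately have "inner D (z - y) * (1 - 0) \<le> h 1 - h 0"
    by (intro convex_on_imp_above_tangent) auto
  then show ?thesis
    by (simp add: h_def)
qed

lemma smooth_convex_constant_nonneg:
  fixes f :: "'a::euclidean_space \<Rightarrow> real"
  assumes convex: "convex_on UNIV f"
    and grad: "\<And>y. (f has_derivative (\<lambda>h. inner (df y) h)) (at y)"
    and smooth: "\<And>u y. f u - f y - inner (df y) (u - y) \<le> L / 2 * (norm (u - y))\<^sup>2"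
  shows "L \<ge> 0"
proof -
  obtain e :: 'a where "e \<in> Basis"
    using nonempty_Basis by blast
  then have "norm e = 1"
    by simp
  moreover have "f x + inner (df x) ((x + e) - x) \<le> f (x + e)"
    by (rule convex_on_gradient_inequality[OF convex grad])
  moreover note smooth[of "x + e" x]
  ultimately show ?thesis
    by simp
qed

lemma smooth_convex_bregman_lower_bound:
  fixes f :: "'a::real_inner \<Rightarrow> real"
  assumes convex: "convex_on UNIV f"
    and grad: "\<And>y. (f has_derivative (\<lambda>h. inner (df y) h)) (at y)"
    and smooth: "\<And>u y. f u - f y - inner (df y) (u - y) \<le> L / 2 * (norm (u - y))\<^sup>2"
    and "L > 0"
  shows "f u - f y - inner (df y) (u - y) \<ge> (norm (df u - df y))\<^sup>2 / (2 * L)"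
proof -
  define g where "g = df u - df y"
  define z where "z = u - (1 / L) *\<^sub>R g"
  \<comment> \<open>\<open>z\<close> is a gradient step from \<open>u\<close> for \<open>f - \<langle>df y, \<cdot>\<rangle>\<close>, which is minimal at \<open>y\<close>.\<close>
  have below: "f y + inner (df y) (z - y) \<le> f z"
    by (rule convex_on_gradient_inequality[OF convex grad])
  have above: "f z - f u - inner (df u) (z - u) \<le> L / 2 * (norm (z - u))\<^sup>2"
    by (rule smooth)
  have "L / 2 * (norm (z - u))\<^sup>2 = (norm g)\<^sup>2 / (2 * L)"
    using \<open>L > 0\<close> by (simp add: z_def power_divide power2_eq_square)
  moreover have "inner (df u) (z - u) - inner (df y) (z - y) = inner g (z - u) - inner (df y) (u - y)"
    by (simp add: g_def inner_diff_left inner_diff_right)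
  moreover have "inner g (z - u) = - (norm g)\<^sup>2 / L"
    by (simp add: z_def power2_norm_eq_inner)
  moreover have "(norm g)\<^sup>2 / L = 2 * ((norm g)\<^sup>2 / (2 * L))"
    by simp
  ultimately show ?thesis
    using below above unfolding g_def by linarith
qed

lemma smooth_convex_gradient_lipschitz_pos:
  fixes f :: "'a::real_inner \<Rightarrow> real"
  assumes convex: "convex_on UNIV f"
    and grad: "\<And>y. (f has_derivative (\<lambda>h. inner (df y) h)) (at y)"
    and smooth: "\<And>u y. f u - f y - inner (df y) (u - y) \<le> L / 2 * (norm (u - y))\<^sup>2"
    and "L > 0"
  shows "norm (df u - df y) \<le> L * norm (u - y)"
proof -
  define g where "g = df u - df y"
  have "(norm g)\<^sup>2 / L = (norm g)\<^sup>2 / (2 * L) + (norm (df y - df u))\<^sup>2 / (2 * L)"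
    by (simp add: g_def norm_minus_commute)
  also have "\<dots> \<le> (f u - f y - inner (df y) (u - y)) + (f y - f u - inner (df u) (y - u))"
    using smooth_convex_bregman_lower_bound[OF convex grad smooth \<open>L > 0\<close>, of u y]
      smooth_convex_bregman_lower_bound[OF convex grad smooth \<open>L > 0\<close>, of y u]
    unfolding g_def by linarith
  also have "\<dots> = inner g (u - y)"
    by (simp add: g_def inner_diff_left inner_diff_right algebra_simps)
  also have "\<dots> \<le> norm g * norm (u - y)"
    by (rule norm_cauchy_schwarz)
  finally have "norm g * norm g \<le> norm g * (L * norm (u - y))"
    using \<open>L > 0\<close> by (simp add: power2_eq_square field_simps)
  then show ?thesis
    using \<open>L > 0\<close> unfolding g_def[symmetric] by (cases "norm g = 0") auto
qed

lemma smooth_convex_gradient_lipschitz: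
  fixes f :: "'a::real_inner \<Rightarrow> real"
  assumes convex: "convex_on UNIV f"
    and grad: "\<And>y. (f has_derivative (\<lambda>h. inner (df y) h)) (at y)"
    and smooth: "\<And>u y. f u - f y - inner (df y) (u - y) \<le> L / 2 * (norm (u - y))\<^sup>2"
    and "L \<ge> 0"
  shows "norm (df u - df y) \<le> L * norm (u - y)"
proof -
  have bound: "norm (df u - df y) \<le> (L + e) * norm (u - y)" if "e > 0" for e
  proof (rule smooth_convex_gradient_lipschitz_pos[OF convex grad])
    show "f u - f y - inner (df y) (u - y) \<le> (L + e) / 2 * (norm (u - y))\<^sup>2" for u y
      using smooth[of u y] mult_right_mono[of L "L + e" "(norm (u - y))\<^sup>2"] \<open>e > 0\<close> by simp
    show "L + e > 0"
      using \<open>L \<ge> 0\<close> \<open>e > 0\<close> by simp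
  qed
  have "((\<lambda>e. (L + e) * norm (u - y)) \<longlongrightarrow> L * norm (u - y)) (at_right 0)"
    by (auto intro!: tendsto_eq_intros)
  moreover have "\<forall>\<^sub>F e in at_right 0. norm (df u - df y) \<le> (L + e) * norm (u - y)"
    using eventually_at_right_less[of 0] bound by (rule eventually_mono)
  ultimately show ?thesis
    by (rule tendsto_lowerbound) simp
qed

lemma gradient_add_eps_subdiff:
  fixes f :: "'a::real_inner \<Rightarrow> real" and g :: "'a \<Rightarrow> ereal"
  assumes convex: "convex_on UNIV f"
    and deriv: "(f has_derivative (\<lambda>h. inner D h)) (at y)"
    and proper: "proper_fun g"
    and v: "v \<in> eps_subdiff g \<epsilon> y"
  shows "D + v \<in> eps_subdiff (\<lambda>z. ereal (f z) + g z) \<epsilon> y"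
proof -
  have "y \<in> ext_dom g"
    using v unfolding eps_subdiff_def by (auto split: if_splits)
  then obtain a where ga: "g y = ereal a"
    using proper unfolding ext_dom_def proper_fun_def by (cases "g y") auto
  have v_ineq: "ereal (inner v (z - y)) \<le> g z - g y + ereal \<epsilon>" for z
    using v \<open>y \<in> ext_dom g\<close> unfolding eps_subdiff_def by auto
  have "ereal (inner (D + v) (z - y)) \<le> (ereal (f z) + g z) - (ereal (f y) + g y) + ereal \<epsilon>" for z
  proof (cases "g z")
    case (real b)
    have "inner v (z - y) \<le> b - a + \<epsilon>"
      using v_ineq[of z] real ga by simp
    moreover have "f y + inner D (z - y) \<le> f z"
      by (rule convex_on_gradient_inequality[OF convex deriv])
    ultimately show ?thesis
      using real ga by (simp add: inner_add_left)
  next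
    case PInf
    then show ?thesis
      using ga by simp
  next
    case MInf
    then show ?thesis
      using proper unfolding proper_fun_def by simp
  qed
  moreover have "y \<in> ext_dom (\<lambda>z. ereal (f z) + g z)"
    using ga unfolding ext_dom_def by simp
  ultimately show ?thesis
    unfolding eps_subdiff_def by simp
qed

theorem lemma2p14:
  fixes f :: "real^'n \<Rightarrow> real" and df :: "real^'n \<Rightarrow> real^'n"
    and g :: "real^'n \<Rightarrow> ereal"
    and L \<epsilon> \<rho> :: real and x xt :: "real^'n"
  assumes f_convex: "convex_on UNIV f"
    and f_grad: "\<And>y. (f has_derivative (\<lambda>h. inner (df y) h)) (at y)"
    and f_smooth: "\<And>u y. f u - f y - inner (df y) (u - y) \<le> L / 2 * (norm (u - y))\<^sup>2"
    and g_proper: "proper_fun g" and g_closed: "closed_fun g" and g_convex: "convex_efun g"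
    and eps: "\<epsilon> \<ge> 0" and rho: "\<rho> > 0"
    and approx: "\<exists>v \<in> eps_subdiff g \<epsilon> xt. df x - \<rho> *\<^sub>R (x - xt) + v = 0"
  shows "ereal (norm (x - xt)) \<ge>
           ereal (inverse (L + \<rho>)) * dist0 (eps_subdiff (\<lambda>z. ereal (f z) + g z) \<epsilon> xt)"
proof -
  obtain v where v: "v \<in> eps_subdiff g \<epsilon> xt" and step: "df x - \<rho> *\<^sub>R (x - xt) + v = 0"
    using approx by blast
  have L: "L \<ge> 0"
    by (rule smooth_convex_constant_nonneg[OF f_convex f_grad f_smooth])
  define w where "w = df xt + v"
  have "w \<in> eps_subdiff (\<lambda>z. ereal (f z) + g z) \<epsilon> xt"
    unfolding w_def by (rule gradient_add_eps_subdiff[OF f_convex f_grad g_proper v])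
  then have dist_le: "dist0 (eps_subdiff (\<lambda>z. ereal (f z) + g z) \<epsilon> xt) \<le> ereal (norm w)"
    unfolding dist0_def by (rule INF_lower)
  have "w = (df xt - df x) + \<rho> *\<^sub>R (x - xt)"
    using step unfolding w_def by (simp add: algebra_simps eq_neg_iff_add_eq_0[symmetric])
  then have "norm w \<le> L * norm (xt - x) + \<rho> * norm (x - xt)"
    using norm_triangle_ineq[of "df xt - df x" "\<rho> *\<^sub>R (x - xt)"] rho
      smooth_convex_gradient_lipschitz[OF f_convex f_grad f_smooth L, of xt x] by simp
  then have norm_le: "inverse (L + \<rho>) * norm w \<le> norm (x - xt)"
    using L rho by (simp add: norm_minus_commute field_simps)
  have "ereal (inverse (L + \<rho>)) * dist0 (eps_subdiff (\<lambda>z. ereal (f z) + g z) \<epsilon> xt)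
      \<le> ereal (inverse (L + \<rho>)) * ereal (norm w)"
    using dist_le L rho by (intro ereal_mult_left_mono) auto
  also have "\<dots> \<le> ereal (norm (x - xt))"
    using norm_le by simp
  finally show ?thesis .
qed

end
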